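(* Let $H$ and $H'$ be Hessenberg spaces of $n\times n$ matrices, each minimal in its $E_{1n}$-equivalence class. Then $X_H\subseteq X_{H'}$ if and only if $H\subseteq H'$.
   Context: $B$ is the group of invertible upper-triangular $n\times n$ complex matrices; $[g]$ denotes the flag whose $k$-dimensional subspace is spanned by the first $k$ columns of $g$. $E_{kl}$ is the matrix unit with $1$ in entry $(k,l)$. A Hessenberg space is a subspace of the form $H_h=\operatorname{span}\{E_{kl}: k\le h(l)\}$ for a nondecreasing function $h:\{1,\dots,n\}\to\{0,1,\dots,n\}$. For a Hessenberg space $K$, $X_K=\{[g]\in GL_n(\mathbb{C})/B: g^{-1}E_{1n}g\in K\}$. Two Hessenberg spaces $K,K'$ are $E_{1n}$-equivalent if $X_K=X_{K'}$; $K$ is minimal in its $E_{1n}$-equivalence class if no Hessenberg space properly contained in $K$ is $E_{1n}$-equivalent to $K$. *)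

theory Defs
  imports "Jordan_Normal_Form.Matrix"
begin

text \<open>Conventions: n x n complex matrices are JNF matrices in carrier_mat n n,
 with 0-based indices. Row/column index i (0-based) corresponds to i+1 (1-based).\<close>

definition E1n :: "nat \<Rightarrow> complex mat" where
  "E1n n = mat n n (\<lambda>(i,j). if i = 0 \<and> j = n - 1 then 1 else 0)"

text \<open>Hessenberg space H_h = span of E_{kl} with k <= h(l) (1-based);
 0-based: column l, row k allowed iff k < h l.\<close>
definition hess_space :: "nat \<Rightarrow> (nat \<Rightarrow> nat) \<Rightarrow> complex mat set" where
  "hess_space n h = {A \<in> carrier_mat n n. \<forall>k<n. \<forall>l<n. \<not> k < h l \<longrightarrow> A $$ (k,l) = 0}"

definition is_hessenberg_space :: "nat \<Rightarrow> complex mat set \<Rightarrow> bool" where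
  "is_hessenberg_space n K \<longleftrightarrow>
     (\<exists>h. (\<forall>l<n. h l \<le> n) \<and> (\<forall>l1 l2. l1 \<le> l2 \<longrightarrow> l2 < n \<longrightarrow> h l1 \<le> h l2)
          \<and> K = hess_space n h)"

definition flag_of :: "nat \<Rightarrow> complex mat \<Rightarrow> nat \<Rightarrow> complex vec set" where
  "flag_of n g k = {g *\<^sub>v x | x. x \<in> carrier_vec n \<and> (\<forall>i<n. k \<le> i \<longrightarrow> x $ i = 0)}"

definition is_inverse_mat :: "nat \<Rightarrow> complex mat \<Rightarrow> complex mat \<Rightarrow> bool" where
  "is_inverse_mat n g ginv \<longleftrightarrow> g \<in> carrier_mat n n \<and> ginv \<in> carrier_mat n n \<and>
     g * ginv = 1\<^sub>m n \<and> ginv * g = 1\<^sub>m n"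

definition X_hess :: "nat \<Rightarrow> complex mat set \<Rightarrow> (nat \<Rightarrow> complex vec set) set" where
  "X_hess n K = {flag_of n g | g. \<exists>ginv. is_inverse_mat n g ginv \<and> ginv * E1n n * g \<in> K}"

definition E1n_equivalent :: "nat \<Rightarrow> complex mat set \<Rightarrow> complex mat set \<Rightarrow> bool" where
  "E1n_equivalent n K K' \<longleftrightarrow> X_hess n K = X_hess n K'"

definition minimal_in_class :: "nat \<Rightarrow> complex mat set \<Rightarrow> bool" where
  "minimal_in_class n K \<longleftrightarrow> is_hessenberg_space n K \<and>
     \<not> (\<exists>K'. is_hessenberg_space n K' \<and> K' \<subset> K \<and> E1n_equivalent n K' K)"

end

theory Submission
  imports Defs "Jordan_Normal_Form.Determinant" "HOL-Combinatorics.Permutations"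
begin

text \<open>
  For invertible \<open>g\<close>, the matrix \<open>g\<^sup>-\<^sup>1 E\<^sub>1\<^sub>n g = u w\<^sup>T\<close> has rank one, where \<open>u\<close> is the
  first column of \<open>g\<^sup>-\<^sup>1\<close> and \<open>w\<close> the last row of \<open>g\<close>; moreover \<open>w\<^sup>T u = 0\<close> once \<open>n \<ge> 2\<close>.
  The last index \<open>a\<close> with \<open>u\<^sub>a \<noteq> 0\<close> and the first index \<open>b\<close> with \<open>w\<^sub>b \<noteq> 0\<close> depend
  only on the flag \<open>[g]\<close> (they record where \<open>e\<^sub>1\<close> enters the flag and where the last
  coordinate stops vanishing on it), and the \<open>(a, b)\<close> entry of \<open>g\<^sup>-\<^sup>1 E\<^sub>1\<^sub>n g\<close> is nonzero.
  Conjugating by a permutation matrix yields the matrix unit \<open>E\<^sub>a\<^sub>b\<close> for any \<open>a \<noteq> b\<close>, so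
  \<open>X\<^sub>H \<subseteq> X\<^bsub>H'\<^esub>\<close> forces every off-diagonal \<open>E\<^sub>a\<^sub>b \<in> H\<close> into \<open>H'\<close>.
  A diagonal \<open>E\<^sub>b\<^sub>b\<close> at the bottom of column \<open>b\<close> of \<open>H\<close> is handled by minimality: if
  column \<open>b - 1\<close> of \<open>H\<close> stopped above row \<open>b\<close>, then \<open>w\<^sup>T u = u\<^sub>b w\<^sub>b\<close> would make the
  \<open>(b, b)\<close> entry of every conjugate in \<open>H\<close> vanish, and \<open>E\<^sub>b\<^sub>b\<close> could be removed from \<open>H\<close>
  without changing \<open>X\<^sub>H\<close>. Hence column \<open>b - 1\<close> reaches row \<open>b\<close>, and this off-diagonal
  entry carries over to \<open>H'\<close>, whose columns are nested.
\<close>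

lemma E1n_conj_entry:
  assumes "gi \<in> carrier_mat n n" "g \<in> carrier_mat n n" "k < n" "l < n"
  shows "(gi * E1n n * g) $$ (k, l) = gi $$ (k, 0) * g $$ (n - 1, l)"
proof -
  define C where "C = mat n n (\<lambda>(i, j). if j = n - 1 then gi $$ (i, 0) else 0)"
  have "gi * E1n n = C"
  proof (rule eq_matI)
    show "(gi * E1n n) $$ (i, j) = C $$ (i, j)" if "i < dim_row C" "j < dim_col C" for i j
      using that assms by (simp add: C_def E1n_def scalar_prod_def if_distrib sum.delta cong: if_cong)
  qed (use assms in \<open>simp_all add: C_def E1n_def\<close>)
  then show ?thesis
    using assms by (simp add: C_def scalar_prod_def if_distrib if_distribR sum.delta' cong: if_cong)
qed

lemma inverse_last_row_first_col_orthogonal: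
  assumes "is_inverse_mat n g gi" "2 \<le> n"
  shows "(\<Sum>j<n. g $$ (n - 1, j) * gi $$ (j, 0)) = 0"
proof -
  have g: "g \<in> carrier_mat n n" and gi: "gi \<in> carrier_mat n n" and "g * gi = 1\<^sub>m n"
    using assms by (auto simp: is_inverse_mat_def)
  then have "(g * gi) $$ (n - 1, 0) = 0"
    using assms by simp
  moreover have "(g * gi) $$ (n - 1, 0) = (\<Sum>j<n. g $$ (n - 1, j) * gi $$ (j, 0))"
    using g gi assms by (simp add: scalar_prod_def atLeast0LessThan)
  ultimately show ?thesis by simp
qed

lemma mem_flag_of_iff:
  assumes "is_inverse_mat n g gi"
  shows "v \<in> flag_of n g k \<longleftrightarrow> v \<in> carrier_vec n \<and> (\<forall>i<n. k \<le> i \<longrightarrow> (gi *\<^sub>v v) $ i = 0)"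
proof
  have g: "g \<in> carrier_mat n n" and gi: "gi \<in> carrier_mat n n"
    and "g * gi = 1\<^sub>m n" "gi * g = 1\<^sub>m n"
    using assms by (auto simp: is_inverse_mat_def)
  then have left_inv: "gi *\<^sub>v (g *\<^sub>v x) = x" if "x \<in> carrier_vec n" for x
    using that by (simp flip: assoc_mult_mat_vec)
  have right_inv: "g *\<^sub>v (gi *\<^sub>v v) = v" if "v \<in> carrier_vec n" for v
    using that g gi \<open>g * gi = 1\<^sub>m n\<close> by (simp flip: assoc_mult_mat_vec)
  show "v \<in> carrier_vec n \<and> (\<forall>i<n. k \<le> i \<longrightarrow> (gi *\<^sub>v v) $ i = 0)" if "v \<in> flag_of n g k"
    using that g left_inv unfolding flag_of_def by auto
  show "v \<in> flag_of n g k" if "v \<in> carrier_vec n \<and> (\<forall>i<n. k \<le> i \<longrightarrow> (gi *\<^sub>v v) $ i = 0)"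
    using that gi right_inv[of v] unfolding flag_of_def by (auto intro!: exI[of _ "gi *\<^sub>v v"])
qed

lemma unit_vec_0_mem_flag_of_iff:
  assumes "is_inverse_mat n g gi" "0 < n"
  shows "unit_vec n 0 \<in> flag_of n g k \<longleftrightarrow> (\<forall>i<n. k \<le> i \<longrightarrow> gi $$ (i, 0) = 0)"
proof -
  have "gi \<in> carrier_mat n n"
    using assms(1) by (simp add: is_inverse_mat_def)
  with assms show ?thesis
    by (simp add: mem_flag_of_iff[OF assms(1)])
qed

lemma flag_of_last_coord_vanishes_iff:
  assumes "g \<in> carrier_mat n n" "0 < n"
  shows "(\<forall>v\<in>flag_of n g k. v $ (n - 1) = 0) \<longleftrightarrow> (\<forall>j<n. j < k \<longrightarrow> g $$ (n - 1, j) = 0)"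
proof
  assume vanish: "\<forall>v\<in>flag_of n g k. v $ (n - 1) = 0"
  show "\<forall>j<n. j < k \<longrightarrow> g $$ (n - 1, j) = 0"
  proof (intro allI impI)
    fix j assume "j < n" "j < k"
    then have "g *\<^sub>v unit_vec n j \<in> flag_of n g k"
      unfolding flag_of_def by auto
    then show "g $$ (n - 1, j) = 0"
      using vanish \<open>j < n\<close> assms by auto
  qed
next
  assume "\<forall>j<n. j < k \<longrightarrow> g $$ (n - 1, j) = 0"
  then have "(g *\<^sub>v x) $ (n - 1) = 0" if "x \<in> carrier_vec n" "\<forall>i<n. k \<le> i \<longrightarrow> x $ i = 0" for x
    using that assms by (auto simp: scalar_prod_def not_le intro!: sum.neutral)
  then show "\<forall>v\<in>flag_of n g k. v $ (n - 1) = 0"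
    unfolding flag_of_def by blast
qed

definition perm_mat :: "nat \<Rightarrow> (nat \<Rightarrow> nat) \<Rightarrow> 'a :: {zero, one} mat" where
  "perm_mat n p = mat n n (\<lambda>(i, j). if i = p j then 1 else 0)"

lemma transpose_perm_mat_mult_perm_mat:
  assumes "p permutes {..<n}"
  shows "transpose_mat (perm_mat n p) * perm_mat n p = (1\<^sub>m n :: 'a :: semiring_1 mat)"
proof (rule eq_matI)
  fix i j assume ij: "i < dim_row (1\<^sub>m n :: 'a mat)" "j < dim_col (1\<^sub>m n :: 'a mat)"
  then have "p i < n"
    using permutes_in_image[OF assms] by simp
  have "(transpose_mat (perm_mat n p) * perm_mat n p) $$ (i, j)
      = (\<Sum>k\<in>{0..<n}. (if k = p i then 1 else 0) * (if k = p j then 1 else 0) :: 'a)"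
    using ij by (simp add: perm_mat_def scalar_prod_def)
  also have "\<dots> = (\<Sum>k\<in>{0..<n}. if k = p i then (if p i = p j then 1 else 0) else 0)"
    by (intro sum.cong) auto
  also have "\<dots> = (if p i = p j then 1 else 0)"
    using \<open>p i < n\<close> by simp
  also have "\<dots> = 1\<^sub>m n $$ (i, j)"
    using ij permutes_inj[OF assms] by (auto dest: injD)
  finally show "(transpose_mat (perm_mat n p) * perm_mat n p) $$ (i, j) = (1\<^sub>m n :: 'a mat) $$ (i, j)" .
qed (auto simp: perm_mat_def)

lemma is_inverse_perm_mat:
  assumes "p permutes {..<n}"
  shows "is_inverse_mat n (perm_mat n p) (transpose_mat (perm_mat n p))"
proof -
  have "perm_mat n p \<in> carrier_mat n n" by (simp add: perm_mat_def)
  with transpose_perm_mat_mult_perm_mat[OF assms] show ?thesis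
    unfolding is_inverse_mat_def by (auto intro: mat_mult_left_right_inverse)
qed

lemma permutes_lessThan_to_first_and_last:
  fixes a b n :: nat
  assumes "a < n" "b < n" "a \<noteq> b \<or> n = 1"
  obtains p where "p permutes {..<n}" "p a = 0" "p b = n - 1"
proof
  let ?q = "transpose a 0"
  show "transpose (?q b) (n - 1) \<circ> ?q permutes {..<n}"
    using assms by (intro permutes_compose permutes_swap_id) (auto simp: transpose_def)
  show "(transpose (?q b) (n - 1) \<circ> ?q) a = 0" "(transpose (?q b) (n - 1) \<circ> ?q) b = n - 1"
    using assms by (auto simp: transpose_def)
qed

lemma X_hess_mono: "K \<subseteq> K' \<Longrightarrow> X_hess n K \<subseteq> X_hess n K'"
  unfolding X_hess_def by blast

lemma hess_space_mono: "(\<And>l. l < n \<Longrightarrow> h l \<le> h' l) \<Longrightarrow> hess_space n h \<subseteq> hess_space n h'"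
  unfolding hess_space_def by fastforce

lemma E1n_conj_corner_entry_neq_0:
  assumes inv: "is_inverse_mat n g gi" and inv': "is_inverse_mat n g' gi'"
    and flag: "flag_of n g = flag_of n g'" and a: "a < n" and b: "b < n"
    and u: "gi $$ (a, 0) \<noteq> 0" "\<forall>i<n. a < i \<longrightarrow> gi $$ (i, 0) = 0"
    and w: "g $$ (n - 1, b) \<noteq> 0" "\<forall>j<b. g $$ (n - 1, j) = 0"
  shows "(gi' * E1n n * g') $$ (a, b) \<noteq> 0"
proof -
  have g: "g \<in> carrier_mat n n" "g' \<in> carrier_mat n n" "gi' \<in> carrier_mat n n"
    using inv inv' by (simp_all add: is_inverse_mat_def)
  have "0 < n"
    using a by simp
  have first_col: "(\<forall>i<n. k \<le> i \<longrightarrow> gi' $$ (i, 0) = 0) \<longleftrightarrow> a < k" for k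
    using unit_vec_0_mem_flag_of_iff[OF inv \<open>0 < n\<close>, of k]
      unit_vec_0_mem_flag_of_iff[OF inv' \<open>0 < n\<close>, of k] flag a u
    by (metis le_less_trans not_le order_refl)
  have "gi' $$ (a, 0) \<noteq> 0"
    using first_col[of a] first_col[of "Suc a"] a by (auto simp: Suc_le_eq le_less)
  moreover have last_row: "(\<forall>j<n. j < k \<longrightarrow> g' $$ (n - 1, j) = 0) \<longleftrightarrow> k \<le> b" for k
    using flag_of_last_coord_vanishes_iff[OF g(1) \<open>0 < n\<close>, of k]
      flag_of_last_coord_vanishes_iff[OF g(2) \<open>0 < n\<close>, of k] flag b w
    by (metis le_less_trans not_le order_refl)
  have "g' $$ (n - 1, b) \<noteq> 0"
    using last_row[of b] last_row[of "Suc b"] b by (auto simp: less_Suc_eq)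
  ultimately show ?thesis
    using E1n_conj_entry[OF g(3,2) a b] by simp
qed

lemma X_hess_subset_imp_hess_bound:
  assumes X: "X_hess n (hess_space n h) \<subseteq> X_hess n (hess_space n h')"
    and a: "a < n" and b: "b < n" and "a \<noteq> b \<or> n = 1" and "a < h b"
  shows "a < h' b"
proof -
  obtain p where p: "p permutes {..<n}" "p a = 0" "p b = n - 1"
    using permutes_lessThan_to_first_and_last[OF a b \<open>a \<noteq> b \<or> n = 1\<close>] by blast
  define P :: "complex mat" where "P = perm_mat n p"
  have inv: "is_inverse_mat n P (transpose_mat P)"
    unfolding P_def using is_inverse_perm_mat[OF p(1)] .
  have P: "P \<in> carrier_mat n n" "transpose_mat P \<in> carrier_mat n n"
    by (simp_all add: P_def perm_mat_def)
  have "0 = p i \<longleftrightarrow> i = a" "n - 1 = p i \<longleftrightarrow> i = b" for i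
    using p permutes_inj[OF p(1)] by (metis injD)+
  then have first_col: "transpose_mat P $$ (i, 0) = (if i = a then 1 else 0)"
    and last_row: "P $$ (n - 1, i) = (if i = b then 1 else 0)" if "i < n" for i
    using that a by (auto simp: P_def perm_mat_def)
  \<comment> \<open>The conjugate of \<open>E1n n\<close> by \<open>P\<close> is the matrix unit at \<open>(a, b)\<close>.\<close>
  have "transpose_mat P * E1n n * P \<in> hess_space n h"
    unfolding hess_space_def
  proof (intro CollectI conjI allI impI)
    fix k l assume "k < n" "l < n" "\<not> k < h l"
    then show "(transpose_mat P * E1n n * P) $$ (k, l) = 0"
      using E1n_conj_entry[OF P(2,1)] first_col last_row \<open>a < h b\<close> by auto
  qed (use P in auto)
  then have "flag_of n P \<in> X_hess n (hess_space n h')"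
    using inv X unfolding X_hess_def by blast
  then obtain g gi where "flag_of n P = flag_of n g" "is_inverse_mat n g gi"
    and M: "gi * E1n n * g \<in> hess_space n h'"
    unfolding X_hess_def by blast
  then have "(gi * E1n n * g) $$ (a, b) \<noteq> 0"
    using E1n_conj_corner_entry_neq_0[OF inv _ _ a b] first_col last_row a b by simp
  with M show "a < h' b"
    using a b unfolding hess_space_def by auto
qed

lemma E1n_conj_diag_entry_eq_0:
  assumes inv: "is_inverse_mat n g gi" and "2 \<le> n" "b < n"
    and M: "gi * E1n n * g \<in> hess_space n h" and "h b \<le> Suc b" and "\<forall>l<b. h l \<le> b"
  shows "(gi * E1n n * g) $$ (b, b) = 0"
proof (rule ccontr)
  have g: "g \<in> carrier_mat n n" "gi \<in> carrier_mat n n"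
    using inv by (simp_all add: is_inverse_mat_def)
  have M_zero: "gi $$ (k, 0) * g $$ (n - 1, l) = 0" if "k < n" "l < n" "\<not> k < h l" for k l
    using M that E1n_conj_entry[OF g(2,1) that(1,2)] unfolding hess_space_def by auto
  assume "(gi * E1n n * g) $$ (b, b) \<noteq> 0"
  then have u: "gi $$ (b, 0) \<noteq> 0" and w: "g $$ (n - 1, b) \<noteq> 0"
    using E1n_conj_entry[OF g(2,1) \<open>b < n\<close> \<open>b < n\<close>] by auto
  have "gi $$ (k, 0) = 0" if "b < k" "k < n" for k
    using M_zero[of k b] that w \<open>b < n\<close> \<open>h b \<le> Suc b\<close> by auto
  moreover have "g $$ (n - 1, l) = 0" if "l < b" for l
    using M_zero[of b l] that u \<open>b < n\<close> \<open>\<forall>l<b. h l \<le> b\<close> by auto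
  ultimately have "(\<Sum>j<n. g $$ (n - 1, j) * gi $$ (j, 0)) = (\<Sum>j\<in>{b}. g $$ (n - 1, j) * gi $$ (j, 0))"
    using \<open>b < n\<close> by (intro sum.mono_neutral_right) (auto simp: nat_neq_iff)
  then show False
    using inverse_last_row_first_col_orthogonal[OF inv \<open>2 \<le> n\<close>] u w by simp
qed

lemma hess_space_fun_upd_diag:
  assumes "b < n" "h b = Suc b"
  shows "hess_space n (h(b := b)) = {M \<in> hess_space n h. M $$ (b, b) = 0}"
proof -
  have "\<not> k < (h(b := b)) l \<longleftrightarrow> \<not> k < h l \<or> (k = b \<and> l = b)" for k l
    using assms by auto
  then show ?thesis
    using assms unfolding hess_space_def by auto
qed

lemma minimal_in_class_diag_corner:
  assumes "2 \<le> n" and bounded: "\<forall>l<n. h l \<le> n"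
    and mono: "\<forall>l1 l2. l1 \<le> l2 \<longrightarrow> l2 < n \<longrightarrow> h l1 \<le> h l2"
    and min: "minimal_in_class n (hess_space n h)" and b: "b < n" "h b = Suc b"
  shows "0 < b \<and> Suc b \<le> h (b - 1)"
proof (rule ccontr)
  assume not_corner: "\<not> ?thesis"
  have below: "h l \<le> b" if "l < b" for l
  proof -
    have "h (b - 1) \<le> b"
      using not_corner that by simp
    moreover have "h l \<le> h (b - 1)"
      using mono that b by simp
    ultimately show ?thesis by simp
  qed
  define h' where "h' = h(b := b)"
  have H': "hess_space n h' = {M \<in> hess_space n h. M $$ (b, b) = 0}"
    unfolding h'_def using hess_space_fun_upd_diag[of b n h, OF b] .
  have "is_hessenberg_space n (hess_space n h')"
    unfolding is_hessenberg_space_def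
  proof (intro exI conjI allI impI)
    show "h' l \<le> n" if "l < n" for l
      using that bounded b by (auto simp: h'_def)
    show "h' l1 \<le> h' l2" if "l1 \<le> l2" "l2 < n" for l1 l2
    proof (cases "l2 = b")
      case True
      then show ?thesis
        using that below by (cases "l1 = b") (auto simp: h'_def)
    next
      case False
      have "h l1 \<le> h l2"
        using mono that by blast
      then show ?thesis
        using False b by (auto simp: h'_def)
    qed
  qed (rule refl)
  moreover have "hess_space n h' \<subset> hess_space n h"
  proof -
    define D :: "complex mat" where "D = mat n n (\<lambda>(i, j). if i = b \<and> j = b then 1 else 0)"
    have "D \<in> hess_space n h"
      using b by (auto simp: hess_space_def D_def)
    moreover have "D \<notin> hess_space n h'"
      using H' b by (simp add: D_def)
    ultimately show ?thesis
      using H' by blast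
  qed
  moreover have "X_hess n (hess_space n h') = X_hess n (hess_space n h)"
  proof
    show "X_hess n (hess_space n h') \<subseteq> X_hess n (hess_space n h)"
      using \<open>hess_space n h' \<subset> hess_space n h\<close> by (intro X_hess_mono) simp
    show "X_hess n (hess_space n h) \<subseteq> X_hess n (hess_space n h')"
      using E1n_conj_diag_entry_eq_0[OF _ \<open>2 \<le> n\<close> b(1) _ _ allI[OF impI[OF below]]] b
      unfolding H' X_hess_def by fastforce
  qed
  ultimately show False
    using min unfolding minimal_in_class_def E1n_equivalent_def by blast
qed

lemma hess_bound_of_X_hess_subset:
  assumes X: "X_hess n (hess_space n h) \<subseteq> X_hess n (hess_space n h')"
    and bounded: "\<forall>l<n. h l \<le> n"
    and mono: "\<forall>l1 l2. l1 \<le> l2 \<longrightarrow> l2 < n \<longrightarrow> h l1 \<le> h l2"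
    and min: "minimal_in_class n (hess_space n h)"
    and mono': "\<forall>l1 l2. l1 \<le> l2 \<longrightarrow> l2 < n \<longrightarrow> h' l1 \<le> h' l2"
    and l: "l < n"
  shows "h l \<le> h' l"
proof -
  have "h l \<le> n"
    using bounded l by simp
  consider "h l = 0" | "0 < h l" "h l - 1 \<noteq> l \<or> n = 1" | "h l = Suc l" "2 \<le> n"
    using l by linarith
  then show ?thesis
  proof cases
    case 1
    then show ?thesis by simp
  next
    case 2
    then have "h l - 1 < h' l"
      using X_hess_subset_imp_hess_bound[OF X _ l, of "h l - 1"] \<open>h l \<le> n\<close> by simp
    then show ?thesis
      using \<open>0 < h l\<close> by linarith
  next
    case 3
    then have corner: "0 < l" "Suc l \<le> h (l - 1)"
      using minimal_in_class_diag_corner[OF _ bounded mono min l] by simp_all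
    moreover have "h (l - 1) \<le> n"
      using bounded l by simp
    ultimately have "h (l - 1) - 1 < h' (l - 1)"
      using X_hess_subset_imp_hess_bound[OF X, of "h (l - 1) - 1" "l - 1"] l by simp
    moreover have "h' (l - 1) \<le> h' l"
      using mono' l by simp
    ultimately show ?thesis
      using corner \<open>h l = Suc l\<close> by linarith
  qed
qed

theorem mainTheorem7:
  fixes n :: nat and H H' :: "complex mat set"
  assumes "1 \<le> n"
    and "is_hessenberg_space n H" and "is_hessenberg_space n H'"
    and "minimal_in_class n H" and "minimal_in_class n H'"
  shows "X_hess n H \<subseteq> X_hess n H' \<longleftrightarrow> H \<subseteq> H'"
proof
  show "X_hess n H \<subseteq> X_hess n H'" if "H \<subseteq> H'"
    using that by (rule X_hess_mono)
next
  assume X: "X_hess n H \<subseteq> X_hess n H'"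
  obtain h where "\<forall>l<n. h l \<le> n" "\<forall>l1 l2. l1 \<le> l2 \<longrightarrow> l2 < n \<longrightarrow> h l1 \<le> h l2"
    and H: "H = hess_space n h"
    using assms(2) unfolding is_hessenberg_space_def by blast
  moreover obtain h' where "\<forall>l1 l2. l1 \<le> l2 \<longrightarrow> l2 < n \<longrightarrow> h' l1 \<le> h' l2"
    and H': "H' = hess_space n h'"
    using assms(3) unfolding is_hessenberg_space_def by blast
  ultimately have "h l \<le> h' l" if "l < n" for l
    using hess_bound_of_X_hess_subset[OF _ _ _ _ _ that] X assms(4) by simp
  then show "H \<subseteq> H'"
    unfolding H H' by (rule hess_space_mono)
qed

end
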